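(* For all integers $\ell\ge1$ and $N\ge2$ there exists an $(N,\ell)$-isolating family of size at most $2^\ell\log_2 N$.
   Context: For $m\in[N]=\{1,\dots,N\}$ and $S\subseteq[N]\setminus\{m\}$, a function $h:[N]\to\{0,1\}^\ell$ isolates $m$ from $S$ if $h(m)\notin\{h(m'):m'\in S\}$. A family $\{h_1,\dots,h_M\}$ of functions $[N]\to\{0,1\}^\ell$ is $(N,\ell)$-isolating if for every $S\subseteq[N]$ with $|S|\le 2^{\ell-1}$ and every $m\in[N]\setminus S$ there is $j\in[M]$ such that $h_j$ isolates $m$ from $S$. *)

theory Defs
  imports Complex_Main
begin

text \<open>[N] = {1..N}; {0,1}^l is represented by boolean lists of length l.
  A function [N] -> {0,1}^l is a function nat => bool list whose values on {1..N}
  have length l (values outside [N] are irrelevant).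
  A family {h_1,...,h_M} is an indexed family H :: nat => (nat => bool list), j in {1..M}.\<close>

definition isolates :: "(nat \<Rightarrow> bool list) \<Rightarrow> nat \<Rightarrow> nat set \<Rightarrow> bool" where
  "isolates h m S \<longleftrightarrow> h m \<notin> {h m' | m'. m' \<in> S}"

definition is_hash_fun :: "nat \<Rightarrow> nat \<Rightarrow> (nat \<Rightarrow> bool list) \<Rightarrow> bool" where
  "is_hash_fun N l h \<longleftrightarrow> (\<forall>x\<in>{1..N}. length (h x) = l)"

definition isolating_family :: "nat \<Rightarrow> nat \<Rightarrow> nat \<Rightarrow> (nat \<Rightarrow> nat \<Rightarrow> bool list) \<Rightarrow> bool" where
  "isolating_family N l M H \<longleftrightarrow>
     (\<forall>j\<in>{1..M}. is_hash_fun N l (H j)) \<and>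
     (\<forall>S. S \<subseteq> {1..N} \<longrightarrow> card S \<le> 2 ^ (l - 1) \<longrightarrow>
        (\<forall>m \<in> {1..N} - S. \<exists>j\<in>{1..M}. isolates (H j) m S))"

end

theory Submission
  imports Defs "HOL-Library.FuncSet"
begin

(* Three regimes are treated separately.
   - If N <= 2^l, a single injective map [N] -> {0,1}^l isolates everything.
   - If l = 1, the sets S have at most one element, and the M = ceil(log2 N)
     bit-projections of the binary expansion of m - 1 separate m from any m'.
   - Otherwise we count.  For a fixed m and S with |S| <= 2^(l-1), a uniformly
     random h : [N] -> {0,1}^l fails to isolate m from S with probability at
     most |S| 2^(-l) <= 1/2, so M independent functions all fail with
     probability at most 2^(-M).  There are fewer than 2 N^(2^(l-1)+1) pairs
     (m, S); once this number is below 2^M some family avoids every failure.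
     A short computation shows M = floor(2^l log2 N) suffices when l >= 2 and
     N > 2^l. *)

section \<open>Counting functions with a collision\<close>

text \<open>Among all functions I -> A, those identifying two fixed distinct points are
  determined by their values outside one of them.\<close>
lemma card_collisions:
  fixes I :: "'a set" and A :: "'b set"
  assumes "finite I" "finite A" "m \<in> I" "m' \<in> I" "m' \<noteq> m"
  shows "card {h \<in> PiE I (\<lambda>_. A). h m = h m'} \<le> card A ^ (card I - 1)"
proof -
  let ?C = "{h \<in> PiE I (\<lambda>_. A). h m = h m'}"
  let ?forget = "\<lambda>h. h(m := undefined)"
  have "inj_on ?forget ?C"
  proof (rule inj_onI)
    fix h g assume h: "h \<in> ?C" and g: "g \<in> ?C" and eq: "?forget h = ?forget g"
    have "h m' = g m'" using eq assms(5) by (metis fun_upd_other)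
    then have "h m = g m" using h g by simp
    then show "h = g" using eq by (metis fun_upd_triv fun_upd_upd)
  qed
  moreover have "?forget ` ?C \<subseteq> PiE (I - {m}) (\<lambda>_. A)"
    by (auto simp: PiE_iff extensional_def split: if_splits)
  ultimately have "card ?C \<le> card (PiE (I - {m}) (\<lambda>_. A))"
    using assms(1,2) by (intro card_inj_on_le) (auto simp: finite_PiE)
  also have "\<dots> = card A ^ (card I - 1)"
    using assms(1,3) by (simp add: card_PiE)
  finally show ?thesis .
qed

text \<open>A function fails to isolate m from S only if it collides m with some m' in S.\<close>
lemma card_non_isolating:
  fixes I :: "nat set" and A :: "bool list set"
  assumes "finite I" "finite A" "m \<in> I" "S \<subseteq> I" "m \<notin> S"
  shows "card {h \<in> PiE I (\<lambda>_. A). \<not> isolates h m S} \<le> card S * card A ^ (card I - 1)"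
proof -
  let ?F = "PiE I (\<lambda>_. A)"
  have finS: "finite S" using assms(1,4) finite_subset by blast
  have "{h \<in> ?F. \<not> isolates h m S} \<subseteq> (\<Union>m'\<in>S. {h \<in> ?F. h m = h m'})"
    by (auto simp: isolates_def)
  then have "card {h \<in> ?F. \<not> isolates h m S} \<le> card (\<Union>m'\<in>S. {h \<in> ?F. h m = h m'})"
    using assms(1,2) finS by (intro card_mono) (auto simp: finite_PiE)
  also have "\<dots> \<le> (\<Sum>m'\<in>S. card {h \<in> ?F. h m = h m'})"
    using finS by (rule card_UN_le)
  also have "\<dots> \<le> (\<Sum>m'\<in>S. card A ^ (card I - 1))"
    using assms by (intro sum_mono card_collisions) auto
  finally show ?thesis by simp
qed

definition words :: "nat \<Rightarrow> bool list set" where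
  "words l = {xs. length xs = l}"

lemma card_words: "card (words l) = 2 ^ l"
  using card_lists_length_eq[of "UNIV :: bool set" l] by (simp add: words_def)

lemma finite_words: "finite (words l)"
  using card_words[of l] card.infinite by fastforce

lemma non_isolating_at_most_half:
  assumes "finite I" "m \<in> I" "S \<subseteq> I" "m \<notin> S" "card S \<le> 2 ^ (l - 1)" "l \<ge> 1"
  shows "2 * card {h \<in> PiE I (\<lambda>_. words l). \<not> isolates h m S}
           \<le> card (PiE I (\<lambda>_. words l))"
proof -
  have half: "(2::nat) * 2 ^ (l - 1) = 2 ^ l" using assms(6) by (cases l) auto
  have split: "(2::nat) ^ l * (2 ^ l) ^ (card I - 1) = (2 ^ l) ^ card I"
    using assms(1,2) by (cases "card I") (auto simp: card_gt_0_iff)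
  have "2 * card {h \<in> PiE I (\<lambda>_. words l). \<not> isolates h m S}
          \<le> 2 * (card S * (2 ^ l) ^ (card I - 1))"
    using card_non_isolating[OF assms(1) finite_words assms(2-4)] by (simp add: card_words)
  also have "\<dots> \<le> 2 * 2 ^ (l - 1) * (2 ^ l) ^ (card I - 1)"
    using assms(5) by simp
  also have "\<dots> = 2 ^ l * (2 ^ l) ^ (card I - 1)" by (simp only: half)
  also have "\<dots> = card (PiE I (\<lambda>_. words l))"
    using assms(1) by (simp only: split card_PiE card_words prod_constant)
  finally show ?thesis .
qed

section \<open>Counting small subsets\<close>

lemma geometric_sum_le: "(n::nat) \<ge> 2 \<Longrightarrow> (\<Sum>i\<le>k. n ^ i) \<le> 2 * n ^ k"
proof (induction k)
  case (Suc k)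
  then have "(\<Sum>i\<le>Suc k. n ^ i) \<le> 2 * n ^ k + n ^ Suc k" by simp
  also have "2 * n ^ k \<le> n ^ Suc k" using Suc.prems by simp
  finally show ?case by simp
qed simp

lemma card_small_subsets:
  assumes "finite X" "card X \<ge> 2"
  shows "card {S. S \<subseteq> X \<and> card S \<le> k} \<le> 2 * card X ^ k"
proof -
  have "{S. S \<subseteq> X \<and> card S \<le> k} = (\<Union>i\<le>k. {S. S \<subseteq> X \<and> card S = i})"
    by auto
  then have "card {S. S \<subseteq> X \<and> card S \<le> k} \<le> (\<Sum>i\<le>k. card {S. S \<subseteq> X \<and> card S = i})"
    by (simp add: card_UN_le)
  also have "\<dots> = (\<Sum>i\<le>k. card X choose i)"
    using n_subsets[OF assms(1)] by simp
  also have "\<dots> \<le> (\<Sum>i\<le>k. card X ^ i)"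
  proof (intro sum_mono)
    fix i show "card X choose i \<le> card X ^ i"
      by (cases "i \<le> card X") (auto simp: binomial_le_pow binomial_eq_0)
  qed
  also have "\<dots> \<le> 2 * card X ^ k"
    using assms(2) by (rule geometric_sum_le)
  finally show ?thesis .
qed

lemma card_isolation_constraints:
  assumes "N \<ge> 2"
  shows "card (Sigma {1..N} (\<lambda>m. {S. S \<subseteq> {1..N} - {m} \<and> card S \<le> k}))
           \<le> 2 * N ^ (k + 1)"
proof -
  have "Sigma {1..N} (\<lambda>m. {S. S \<subseteq> {1..N} - {m} \<and> card S \<le> k})
          \<subseteq> {1..N} \<times> {S. S \<subseteq> {1..N} \<and> card S \<le> k}" by auto
  then have "card (Sigma {1..N} (\<lambda>m. {S. S \<subseteq> {1..N} - {m} \<and> card S \<le> k}))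
               \<le> card ({1..N} \<times> {S. S \<subseteq> {1..N} \<and> card S \<le> k})"
    by (intro card_mono finite_cartesian_product) auto
  also have "\<dots> = N * card {S. S \<subseteq> {1..N} \<and> card S \<le> k}"
    by (simp add: card_cartesian_product)
  also have "\<dots> \<le> N * (2 * N ^ k)"
    using card_small_subsets[of "{1..N}" k] assms by simp
  finally show ?thesis by simp
qed

section \<open>The union bound\<close>

lemma avoid_all_bad_events:
  assumes "finite P" "(\<Sum>p\<in>P. card {t \<in> T. bad p t}) < card T"
  shows "\<exists>t\<in>T. \<forall>p\<in>P. \<not> bad p t"
proof (rule ccontr)
  assume "\<not> ?thesis"
  then have cover: "T = (\<Union>p\<in>P. {t \<in> T. bad p t})" by blast
  have "card T \<le> (\<Sum>p\<in>P. card {t \<in> T. bad p t})"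
    by (subst cover) (rule card_UN_le[OF assms(1)])
  then show False using assms(2) by simp
qed

lemma card_all_coordinates_bad:
  assumes "finite J"
  shows "card {H \<in> PiE J (\<lambda>_. F). \<forall>j\<in>J. bad (H j)} = card {h \<in> F. bad h} ^ card J"
proof -
  have "{H \<in> PiE J (\<lambda>_. F). \<forall>j\<in>J. bad (H j)} = PiE J (\<lambda>_. {h \<in> F. bad h})"
    by (auto simp: PiE_iff extensional_def)
  then show ?thesis using assms by (simp add: card_PiE)
qed

text \<open>The probabilistic construction: M random hash functions form an isolating
  family as soon as 2^M exceeds the bound 2 N^(2^(l-1)+1) on the number of pairs (m, S).\<close>
lemma isolating_family_exists:
  assumes l: "l \<ge> 1" and N: "N \<ge> 2" and budget: "2 * N ^ (2 ^ (l - 1) + 1) < 2 ^ M"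
  shows "\<exists>H. isolating_family N l M H"
proof -
  define k where "k = (2::nat) ^ (l - 1)"
  define F where "F = PiE {1..N} (\<lambda>_. words l)"
  define T where "T = PiE {1..M} (\<lambda>_. F)"
  define P where "P = Sigma {1..N} (\<lambda>m. {S. S \<subseteq> {1..N} - {m} \<and> card S \<le> k})"
  define bad where "bad = (\<lambda>(m, S) H. \<forall>j\<in>{1..M}. \<not> isolates (H j) m S)"
  have cardT: "card T = card F ^ M" and T_pos: "card T > 0"
    by (simp_all add: T_def F_def card_PiE card_words)
  have cardP: "card P < 2 ^ M"
    using card_isolation_constraints[OF N, of k] budget by (simp add: P_def k_def)
  have bad_small: "2 ^ M * card {H \<in> T. bad p H} \<le> card T" if "p \<in> P" for p
  proof -
    obtain m S where p: "p = (m, S)" by fastforce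
    then have m: "m \<in> {1..N}" and S: "S \<subseteq> {1..N}" "m \<notin> S" "card S \<le> 2 ^ (l - 1)"
      using \<open>p \<in> P\<close> by (auto simp: P_def k_def)
    have "2 ^ M * card {H \<in> T. bad p H} = (2 * card {h \<in> F. \<not> isolates h m S}) ^ M"
      using card_all_coordinates_bad[of "{1..M}" F "\<lambda>h. \<not> isolates h m S"]
      by (simp add: T_def p bad_def power_mult_distrib)
    also have "\<dots> \<le> card T"
      unfolding cardT F_def by (intro power_mono non_isolating_at_most_half m S l) auto
    finally show ?thesis .
  qed
  have "2 ^ M * (\<Sum>p\<in>P. card {H \<in> T. bad p H}) \<le> card P * card T"
    using sum_mono[OF bad_small] by (simp add: sum_distrib_left)
  also have "\<dots> < 2 ^ M * card T" using cardP T_pos by simp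
  finally have "(\<Sum>p\<in>P. card {H \<in> T. bad p H}) < card T" by simp
  moreover have "finite P" unfolding P_def by (intro finite_SigmaI) auto
  ultimately obtain H where H: "H \<in> T" "\<forall>p\<in>P. \<not> bad p H"
    using avoid_all_bad_events[of P T bad] by blast
  have "isolating_family N l M H"
    unfolding isolating_family_def
  proof (intro conjI ballI allI impI)
    fix j assume "j \<in> {1..M}"
    then show "is_hash_fun N l (H j)"
      using H(1) by (auto simp: T_def F_def is_hash_fun_def words_def PiE_iff)
  next
    fix S m assume "S \<subseteq> {1..N}" "card S \<le> 2 ^ (l - 1)" "m \<in> {1..N} - S"
    then have "(m, S) \<in> P" by (auto simp: P_def k_def)
    then show "\<exists>j\<in>{1..M}. isolates (H j) m S" using H(2) by (auto simp: bad_def)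
  qed
  then show ?thesis by blast
qed

section \<open>The two explicit constructions\<close>

lemma injective_isolating_family:
  assumes "N \<le> 2 ^ l"
  shows "\<exists>H. isolating_family N l 1 H"
proof -
  obtain f where f: "f ` {1..N} \<subseteq> words l" "inj_on f {1..N}"
    using card_le_inj[of "{1..N}" "words l"] assms by (auto simp: card_words finite_words)
  have "isolating_family N l 1 (\<lambda>_. f)"
    unfolding isolating_family_def isolates_def is_hash_fun_def
    using f by (auto simp: words_def dest: inj_onD)
  then show ?thesis by blast
qed

text \<open>For l = 1 only singletons S must be handled; the j-th function reads the j-th
  binary digit of x - 1, and two distinct numbers below 2^M differ in some digit < M.\<close>
lemma binary_digit_family:
  assumes "N \<le> 2 ^ M" "M \<ge> 1"
  shows "isolating_family N 1 M (\<lambda>j x. [bit (x - 1) (j - 1)])"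
  unfolding isolating_family_def
proof (intro conjI ballI allI impI)
  fix S m assume S: "S \<subseteq> {1..N}" "card S \<le> 2 ^ (1 - 1)" and m: "m \<in> {1..N} - S"
  have "finite S" using S(1) finite_subset by blast
  then consider "S = {}" | m' where "S = {m'}"
    using S(2) card_le_Suc0_iff_eq[of S] by auto
  then show "\<exists>j\<in>{1..M}. isolates (\<lambda>x. [bit (x - 1) (j - 1)]) m S"
  proof cases
    case 1
    then show ?thesis using assms(2) by (auto simp: isolates_def)
  next
    case (2 m')
    have below: "m - 1 < 2 ^ M" "m' - 1 < 2 ^ M" using m S(1) 2 assms(1) by auto
    have "take_bit M (m - 1) \<noteq> take_bit M (m' - 1)"
      using m S(1) 2 below by (auto simp: take_bit_nat_eq_self)
    then obtain n where "n < M" "bit (m - 1) n \<noteq> bit (m' - 1) n"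
      by (auto simp: bit_eq_iff bit_take_bit_iff)
    then show ?thesis using 2 by (auto simp: isolates_def intro!: bexI[of _ "Suc n"])
  qed
qed (simp add: is_hash_fun_def)

section \<open>Numerical budgets\<close>

lemma binary_digit_budget:
  assumes "N \<ge> 2"
  defines "M \<equiv> nat \<lceil>log 2 (real N)\<rceil>"
  shows "M \<ge> 1" "N \<le> 2 ^ M" "real M \<le> 2 * log 2 (real N)"
proof -
  have y: "log 2 (real N) \<ge> 1" using assms(1) by simp
  then show "M \<ge> 1" "real M \<le> 2 * log 2 (real N)" unfolding M_def by linarith+
  have "real N = 2 powr log 2 (real N)" using assms(1) by simp
  also have "\<dots> \<le> 2 powr real M" unfolding M_def using y by (intro powr_mono) linarith+
  also have "\<dots> = real (2 ^ M)" by (simp add: powr_realpow)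
  finally show "N \<le> 2 ^ M" by linarith
qed

text \<open>With k = 2^(l-1) >= 2 and N >= 4 we have 4 N^(k+1) <= N^(2k) = 2^(2^l log2 N),
  so M = floor(2^l log2 N) meets the budget of the probabilistic construction.\<close>
lemma union_bound_budget:
  assumes l: "l \<ge> 2" and big: "N > 2 ^ l"
  defines "M \<equiv> nat \<lfloor>2 ^ l * log 2 (real N)\<rfloor>"
  shows "2 * N ^ (2 ^ (l - 1) + 1) < 2 ^ M"
proof -
  define k where "k = (2::nat) ^ (l - 1)"
  define x where "x = 2 ^ l * log 2 (real N)"
  have "(2::nat) ^ 1 \<le> 2 ^ (l - 1)" using l by (intro power_increasing) auto
  then have k2: "k \<ge> 2" unfolding k_def by simp
  have lk: "(2::nat) ^ l = 2 * k" unfolding k_def using l by (cases l) auto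
  then have lk_real: "(2::real) ^ l = real (2 * k)" by (metis of_nat_numeral of_nat_power)
  have N4: "N \<ge> 4" using big k2 lk by linarith
  have "2 powr x = (2 powr log 2 (real N)) powr (2 ^ l)"
    unfolding x_def by (simp add: powr_powr mult.commute)
  also have "\<dots> = real N powr real (2 * k)" using N4 lk_real by simp
  also have "\<dots> = real (N ^ (2 * k))" using N4 powr_realpow[of "real N" "2 * k"] by simp
  finally have exp_x: "2 powr x = real (N ^ (2 * k))" .
  have "2 * k = (k + 1) + (k - 1)" using k2 by simp
  then have "N ^ (2 * k) = N ^ (k + 1) * N ^ (k - 1)" by (metis power_add)
  moreover have "N ^ (k - 1) \<ge> N ^ 1" using N4 k2 by (intro power_increasing) auto
  ultimately have "4 * N ^ (k + 1) \<le> N ^ (2 * k)" using N4 by simp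
  then have "real (4 * N ^ (k + 1)) \<le> 2 powr x" unfolding exp_x by linarith
  also have "\<dots> = 2 * 2 powr (x - 1)" by (simp add: powr_diff)
  also have "\<dots> < 2 * 2 powr real M"
    unfolding M_def x_def[symmetric] using N4 by simp linarith
  also have "\<dots> = real (2 * 2 ^ M)" by (simp add: powr_realpow)
  finally show ?thesis unfolding k_def by linarith
qed

theorem mainTheorem10:
  fixes l N :: nat
  assumes "l \<ge> 1" and "N \<ge> 2"
  shows "\<exists>M H. isolating_family N l M H \<and> real M \<le> 2 ^ l * log 2 (real N)"
proof -
  consider (small) "N \<le> 2 ^ l" | (one_bit) "l = 1" "N > 2 ^ l" | (big) "l \<ge> 2" "N > 2 ^ l"
    using assms(1) by linarith
  then show ?thesis
  proof cases
    case small
    have "1 \<le> (2::real) ^ l * log 2 (real N)"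
      using assms(2) by (intro mult_ge1_I) auto
    then show ?thesis using injective_isolating_family[OF small] by auto
  next
    case one_bit
    define M where "M = nat \<lceil>log 2 (real N)\<rceil>"
    have "isolating_family N 1 M (\<lambda>j x. [bit (x - 1) (j - 1)])"
      using binary_digit_family binary_digit_budget[OF assms(2)] by (simp add: M_def)
    then show ?thesis
      using one_bit(1) binary_digit_budget(3)[OF assms(2)] by (auto simp: M_def)
  next
    case big
    then show ?thesis
      using isolating_family_exists[OF assms(1,2) union_bound_budget[OF big]] by auto
  qed
qed

end
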